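(* Let $\Re$ be a commutative Krasner hyperring with identity $1\ne0$, let $\phi:L(\Re)\to L(\Re)\cup\{\emptyset\}$ be a function, and let $T$ be a proper hyperideal of $\Re$ with $\phi(T)\subseteq T$ such that $T$ is $\phi$-prime but not prime. Then $T\circ\sqrt{\phi(T)}\subseteq\phi(T)$, i.e. $t\circ a\in\phi(T)$ for all $t\in T$ and $a\in\sqrt{\phi(T)}$.
   Context: Krasner hyperring: $(\Re,\oplus)$ canonical hypergroup, $(\Re,\circ)$ commutative semigroup with identity $1\ne0$, $0$ absorbing, distributive. Hyperideals and $L(\Re)$ as usual. $\sqrt{I}=\{x: x^n\in I \text{ for some } n\ge1\}$ ($\sqrt{\emptyset}=\emptyset$). $T$ is prime if $a\circ b\in T\Rightarrow a\in T$ or $b\in T$; $T$ is $\phi$-prime if $a\circ b\in T$, $a\circ b\notin\phi(T)$ imply $a\in T$ or $b\in T$. *)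

theory Defs
  imports Main
begin

definition hsum :: "('a \<Rightarrow> 'a \<Rightarrow> 'a set) \<Rightarrow> 'a set \<Rightarrow> 'a set \<Rightarrow> 'a set" where
  "hsum add A B = (\<Union>a\<in>A. \<Union>b\<in>B. add a b)"

definition canonical_hypergroup :: "'a set \<Rightarrow> ('a \<Rightarrow> 'a \<Rightarrow> 'a set) \<Rightarrow> 'a \<Rightarrow> bool" where
  "canonical_hypergroup R add z \<longleftrightarrow>
     z \<in> R \<and>
     (\<forall>x\<in>R. \<forall>y\<in>R. add x y \<noteq> {} \<and> add x y \<subseteq> R) \<and>
     (\<forall>x\<in>R. \<forall>y\<in>R. \<forall>w\<in>R. hsum add (add x y) {w} = hsum add {x} (add y w)) \<and>
     (\<forall>x\<in>R. \<forall>y\<in>R. add x y = add y x) \<and>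
     (\<forall>x\<in>R. add z x = {x}) \<and>
     (\<forall>x\<in>R. \<exists>!x'\<in>R. z \<in> add x x') \<and>
     (\<forall>x\<in>R. \<forall>y\<in>R. \<forall>w\<in>R. \<forall>y'\<in>R. w \<in> add x y \<longrightarrow> z \<in> add y y' \<longrightarrow> x \<in> add w y')"

definition krasner_hyperring ::
  "'a set \<Rightarrow> ('a \<Rightarrow> 'a \<Rightarrow> 'a set) \<Rightarrow> ('a \<Rightarrow> 'a \<Rightarrow> 'a) \<Rightarrow> 'a \<Rightarrow> 'a \<Rightarrow> bool" where
  "krasner_hyperring R add mult z one \<longleftrightarrow>
     canonical_hypergroup R add z \<and>
     one \<in> R \<and> one \<noteq> z \<and>
     (\<forall>x\<in>R. \<forall>y\<in>R. mult x y \<in> R) \<and>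
     (\<forall>x\<in>R. \<forall>y\<in>R. \<forall>w\<in>R. mult (mult x y) w = mult x (mult y w)) \<and>
     (\<forall>x\<in>R. \<forall>y\<in>R. mult x y = mult y x) \<and>
     (\<forall>x\<in>R. mult one x = x) \<and>
     (\<forall>x\<in>R. mult z x = z) \<and>
     (\<forall>x\<in>R. \<forall>y\<in>R. \<forall>w\<in>R. mult w ` (add x y) = add (mult w x) (mult w y))"

text \<open>Hyperideals: nonempty subsets closed under subtraction (a + (-b) \<subseteq> I)
  and absorbing under multiplication. Here -b is the unique opposite.\<close>
definition hyperideal ::
  "'a set \<Rightarrow> ('a \<Rightarrow> 'a \<Rightarrow> 'a set) \<Rightarrow> ('a \<Rightarrow> 'a \<Rightarrow> 'a) \<Rightarrow> 'a \<Rightarrow> 'a set \<Rightarrow> bool" where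
  "hyperideal R add mult z I \<longleftrightarrow>
     I \<noteq> {} \<and> I \<subseteq> R \<and>
     (\<forall>a\<in>I. \<forall>b\<in>I. \<forall>b'\<in>R. z \<in> add b b' \<longrightarrow> add a b' \<subseteq> I) \<and>
     (\<forall>r\<in>R. \<forall>a\<in>I. mult r a \<in> I)"

definition hyperideals ::
  "'a set \<Rightarrow> ('a \<Rightarrow> 'a \<Rightarrow> 'a set) \<Rightarrow> ('a \<Rightarrow> 'a \<Rightarrow> 'a) \<Rightarrow> 'a \<Rightarrow> 'a set set" where
  "hyperideals R add mult z = {I. hyperideal R add mult z I}"

fun hpow :: "('a \<Rightarrow> 'a \<Rightarrow> 'a) \<Rightarrow> 'a \<Rightarrow> 'a \<Rightarrow> nat \<Rightarrow> 'a" where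
  "hpow mult one x 0 = one"
| "hpow mult one x (Suc n) = mult x (hpow mult one x n)"

definition hradical :: "'a set \<Rightarrow> ('a \<Rightarrow> 'a \<Rightarrow> 'a) \<Rightarrow> 'a \<Rightarrow> 'a set \<Rightarrow> 'a set" where
  "hradical R mult one I = {x\<in>R. \<exists>n\<ge>1. hpow mult one x n \<in> I}"

definition hprime :: "'a set \<Rightarrow> ('a \<Rightarrow> 'a \<Rightarrow> 'a) \<Rightarrow> 'a set \<Rightarrow> bool" where
  "hprime R mult T \<longleftrightarrow> (\<forall>a\<in>R. \<forall>b\<in>R. mult a b \<in> T \<longrightarrow> a \<in> T \<or> b \<in> T)"

definition phi_prime :: "'a set \<Rightarrow> ('a \<Rightarrow> 'a \<Rightarrow> 'a) \<Rightarrow> ('a set \<Rightarrow> 'a set) \<Rightarrow> 'a set \<Rightarrow> bool" where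
  "phi_prime R mult \<phi> T \<longleftrightarrow>
     (\<forall>a\<in>R. \<forall>b\<in>R. mult a b \<in> T \<longrightarrow> mult a b \<notin> \<phi> T \<longrightarrow> a \<in> T \<or> b \<in> T)"

end

theory Submission
  imports Defs
begin

text \<open>Since T is not prime, there are a, b \<notin> T with a \<circ> b \<in> T, hence a \<circ> b \<in> \<phi>(T)
  by \<phi>-primeness; call (a, b) a twin zero of T. For t \<in> T pick x \<in> b + t: then x \<notin> T
  and a \<circ> x \<in> a \<circ> b + a \<circ> t \<subseteq> T, so \<phi>-primeness puts a \<circ> x into \<phi>(T), and cancelling
  a \<circ> b gives a \<circ> t \<in> \<phi>(T). Thus a \<circ> T and b \<circ> T lie in \<phi>(T), and expanding
  (a + i) \<circ> (b + j) the same way shows T \<circ> T \<subseteq> \<phi>(T). Finally, if r \<in> \<surd>\<phi>(T) is not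
  in T, some r^k \<notin> T has r \<circ> r^k \<in> T, so (r, r^k) is a twin zero and r \<circ> T \<subseteq> \<phi>(T).\<close>

lemma hyperideal_subset: "hyperideal R add mult z I \<Longrightarrow> I \<subseteq> R"
  unfolding hyperideal_def by blast

lemma hyperideal_nonempty: "hyperideal R add mult z I \<Longrightarrow> I \<noteq> {}"
  unfolding hyperideal_def by blast

lemma hyperideal_add_opposite:
  "hyperideal R add mult z I \<Longrightarrow> a \<in> I \<Longrightarrow> b \<in> I \<Longrightarrow> b' \<in> R \<Longrightarrow> z \<in> add b b'
    \<Longrightarrow> add a b' \<subseteq> I"
  unfolding hyperideal_def by blast

lemma hyperideal_mult_closed:
  "hyperideal R add mult z I \<Longrightarrow> r \<in> R \<Longrightarrow> a \<in> I \<Longrightarrow> mult r a \<in> I"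
  unfolding hyperideal_def by blast

lemma exists_hpow_not_mem_mult_mem:
  assumes "one \<notin> T" and "hpow mult one r n \<in> T"
  shows "\<exists>k. hpow mult one r k \<notin> T \<and> mult r (hpow mult one r k) \<in> T"
  using assms(2)
proof (induction n)
  case 0
  with assms(1) show ?case by simp
next
  case (Suc n)
  then show ?case by (cases "hpow mult one r n \<in> T") auto
qed

locale hyperring =
  fixes R :: "'a set" and add :: "'a \<Rightarrow> 'a \<Rightarrow> 'a set" and mult :: "'a \<Rightarrow> 'a \<Rightarrow> 'a"
    and z one :: 'a
  assumes krasner: "krasner_hyperring R add mult z one"
begin

lemma hypergroup: "canonical_hypergroup R add z"
  using krasner unfolding krasner_hyperring_def by (elim conjE)

lemma zero_closed: "z \<in> R"
  using hypergroup unfolding canonical_hypergroup_def by (elim conjE)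

lemma hadd_nonempty: "x \<in> R \<Longrightarrow> y \<in> R \<Longrightarrow> add x y \<noteq> {}"
  using hypergroup unfolding canonical_hypergroup_def by (elim conjE) blast

lemma hadd_closed: "x \<in> R \<Longrightarrow> y \<in> R \<Longrightarrow> add x y \<subseteq> R"
  using hypergroup unfolding canonical_hypergroup_def by (elim conjE) blast

lemma hadd_commute: "x \<in> R \<Longrightarrow> y \<in> R \<Longrightarrow> add x y = add y x"
  using hypergroup unfolding canonical_hypergroup_def by (elim conjE) blast

lemma zero_hadd: "x \<in> R \<Longrightarrow> add z x = {x}"
  using hypergroup unfolding canonical_hypergroup_def by (elim conjE) blast

lemma opposite_exists: "x \<in> R \<Longrightarrow> \<exists>x'\<in>R. z \<in> add x x'"
  using hypergroup unfolding canonical_hypergroup_def by (elim conjE) (meson ex1_implies_ex)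

lemma hadd_reversible:
  "x \<in> R \<Longrightarrow> y \<in> R \<Longrightarrow> w \<in> R \<Longrightarrow> y' \<in> R \<Longrightarrow> w \<in> add x y \<Longrightarrow> z \<in> add y y'
    \<Longrightarrow> x \<in> add w y'"
  using hypergroup unfolding canonical_hypergroup_def by (elim conjE) meson

lemma one_closed: "one \<in> R"
  using krasner unfolding krasner_hyperring_def by (elim conjE) blast

lemma hmult_closed: "x \<in> R \<Longrightarrow> y \<in> R \<Longrightarrow> mult x y \<in> R"
  using krasner unfolding krasner_hyperring_def by (elim conjE) blast

lemma hmult_commute: "x \<in> R \<Longrightarrow> y \<in> R \<Longrightarrow> mult x y = mult y x"
  using krasner unfolding krasner_hyperring_def by (elim conjE) blast

lemma one_hmult: "x \<in> R \<Longrightarrow> mult one x = x"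
  using krasner unfolding krasner_hyperring_def by (elim conjE) blast

lemma zero_hmult: "x \<in> R \<Longrightarrow> mult z x = z"
  using krasner unfolding krasner_hyperring_def by (elim conjE) blast

lemma hmult_hadd_distrib:
  "x \<in> R \<Longrightarrow> y \<in> R \<Longrightarrow> w \<in> R \<Longrightarrow> mult w ` add x y = add (mult w x) (mult w y)"
  using krasner unfolding krasner_hyperring_def by (elim conjE) blast

lemma hmult_mem_hadd_left:
  assumes "a \<in> R" "b \<in> R" "c \<in> R" "x \<in> add b c"
  shows "mult a x \<in> add (mult a b) (mult a c)"
  using hmult_hadd_distrib[OF assms(2,3,1)] assms(4) by blast

lemma hmult_mem_hadd_right:
  assumes a: "a \<in> R" and b: "b \<in> R" and c: "c \<in> R" and x: "x \<in> add b c"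
  shows "mult x a \<in> add (mult b a) (mult c a)"
proof -
  have "x \<in> R" using hadd_closed[OF b c] x by blast
  have "mult a x \<in> add (mult a b) (mult a c)" by (rule hmult_mem_hadd_left[OF a b c x])
  then show ?thesis
    unfolding hmult_commute[OF a \<open>x \<in> R\<close>] hmult_commute[OF a b] hmult_commute[OF a c] .
qed

lemma hpow_closed: "x \<in> R \<Longrightarrow> hpow mult one x n \<in> R"
  by (induction n) (simp_all add: one_closed hmult_closed)

lemma hyperideal_zero_mem:
  assumes I: "hyperideal R add mult z I"
  shows "z \<in> I"
proof -
  obtain a where a: "a \<in> I" using hyperideal_nonempty[OF I] by blast
  have "a \<in> R" using hyperideal_subset[OF I] a by blast
  have "mult z a \<in> I" using hyperideal_mult_closed[OF I zero_closed a] .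
  then show ?thesis using zero_hmult[OF \<open>a \<in> R\<close>] by simp
qed

lemma hyperideal_hadd_closed:
  assumes I: "hyperideal R add mult z I" and "u \<in> I" "v \<in> I"
  shows "add u v \<subseteq> I"
proof -
  have v: "v \<in> R" using hyperideal_subset[OF I] \<open>v \<in> I\<close> by blast
  obtain v' where v'R: "v' \<in> R" and v': "z \<in> add v v'" using opposite_exists[OF v] by blast
  have "add z v' \<subseteq> I"
    by (rule hyperideal_add_opposite[OF I hyperideal_zero_mem[OF I] \<open>v \<in> I\<close> v'R v'])
  then have "v' \<in> I" unfolding zero_hadd[OF v'R] by simp
  have "z \<in> add v' v" using v' unfolding hadd_commute[OF v v'R] .
  then show ?thesis by (rule hyperideal_add_opposite[OF I \<open>u \<in> I\<close> \<open>v' \<in> I\<close> v])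
qed

lemma hyperideal_hadd_cancel:
  assumes I: "hyperideal R add mult z I"
    and wxy: "w \<in> add x y" and "w \<in> I" "y \<in> I" "x \<in> R"
  shows "x \<in> I"
proof -
  have y: "y \<in> R" and w: "w \<in> R" using hyperideal_subset[OF I] \<open>w \<in> I\<close> \<open>y \<in> I\<close> by blast+
  obtain y' where y'R: "y' \<in> R" and y': "z \<in> add y y'" using opposite_exists[OF y] by blast
  have "x \<in> add w y'" by (rule hadd_reversible[OF \<open>x \<in> R\<close> y w y'R wxy y'])
  moreover have "add w y' \<subseteq> I" by (rule hyperideal_add_opposite[OF I \<open>w \<in> I\<close> \<open>y \<in> I\<close> y'R y'])
  ultimately show ?thesis by blast
qed

lemma hadd_mem_hyperideal_iff:
  assumes I: "hyperideal R add mult z I" and wuv: "w \<in> add u v" and "u \<in> I" "v \<in> R"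
  shows "w \<in> I \<longleftrightarrow> v \<in> I"
proof
  have "u \<in> R" using hyperideal_subset[OF I] \<open>u \<in> I\<close> by blast
  have "w \<in> add v u" using wuv unfolding hadd_commute[OF \<open>u \<in> R\<close> \<open>v \<in> R\<close>] .
  then show "v \<in> I" if "w \<in> I" by (rule hyperideal_hadd_cancel[OF I _ that \<open>u \<in> I\<close> \<open>v \<in> R\<close>])
next
  show "w \<in> I" if "v \<in> I" using hyperideal_hadd_closed[OF I \<open>u \<in> I\<close> that] wuv by blast
qed

lemma hadd_mem_hyperideal_iff':
  assumes I: "hyperideal R add mult z I" and wvu: "w \<in> add v u" and "u \<in> I" "v \<in> R"
  shows "w \<in> I \<longleftrightarrow> v \<in> I"
proof -
  have "u \<in> R" using hyperideal_subset[OF I] \<open>u \<in> I\<close> by blast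
  have "w \<in> add u v" using wvu unfolding hadd_commute[OF \<open>v \<in> R\<close> \<open>u \<in> R\<close>] .
  then show ?thesis by (rule hadd_mem_hyperideal_iff[OF I _ \<open>u \<in> I\<close> \<open>v \<in> R\<close>])
qed

lemma hyperideal_one_mem_eq:
  assumes I: "hyperideal R add mult z I" and "one \<in> I"
  shows "I = R"
proof
  show "R \<subseteq> I"
  proof
    fix x assume x: "x \<in> R"
    have "mult x one \<in> I" by (rule hyperideal_mult_closed[OF I x \<open>one \<in> I\<close>])
    then show "x \<in> I" unfolding hmult_commute[OF x one_closed] one_hmult[OF x] .
  qed
qed (rule hyperideal_subset[OF I])

end

locale phi_prime_hyperideal = hyperring +
  fixes \<phi> :: "'a set \<Rightarrow> 'a set" and T :: "'a set"
  assumes T_hyperideal: "hyperideal R add mult z T"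
    and phi_hyperideal: "hyperideal R add mult z (\<phi> T)"
    and phi_subset: "\<phi> T \<subseteq> T"
    and phi_prime: "phi_prime R mult \<phi> T"
begin

lemma phi_primeD:
  "a \<in> R \<Longrightarrow> b \<in> R \<Longrightarrow> mult a b \<in> T \<Longrightarrow> a \<notin> T \<Longrightarrow> b \<notin> T \<Longrightarrow> mult a b \<in> \<phi> T"
  using phi_prime unfolding phi_prime_def by blast

lemma T_subset: "T \<subseteq> R"
  by (rule hyperideal_subset[OF T_hyperideal])

lemma twin_zero_mult_subset:
  assumes a: "a \<in> R" "a \<notin> T" and b: "b \<in> R" "b \<notin> T" and ab: "mult a b \<in> \<phi> T"
  shows "mult a ` T \<subseteq> \<phi> T"
proof
  fix y assume "y \<in> mult a ` T"
  then obtain i where i: "i \<in> T" and y: "y = mult a i" by blast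
  have iR: "i \<in> R" using T_subset i by blast
  obtain x where x: "x \<in> add b i" using hadd_nonempty[OF b(1) iR] by blast
  have xR: "x \<in> R" using hadd_closed[OF b(1) iR] x by blast
  have "x \<notin> T" using hadd_mem_hyperideal_iff'[OF T_hyperideal x i b(1)] b(2) by blast
  have ax: "mult a x \<in> add (mult a b) (mult a i)"
    by (rule hmult_mem_hadd_left[OF a(1) b(1) iR x])
  have "mult a b \<in> T" using ab phi_subset by blast
  then have "add (mult a b) (mult a i) \<subseteq> T"
    by (rule hyperideal_hadd_closed[OF T_hyperideal _ hyperideal_mult_closed[OF T_hyperideal a(1) i]])
  with ax have "mult a x \<in> T" by blast
  then have "mult a x \<in> \<phi> T" by (rule phi_primeD[OF a(1) xR _ a(2) \<open>x \<notin> T\<close>])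
  then show "y \<in> \<phi> T"
    using hadd_mem_hyperideal_iff[OF phi_hyperideal ax ab hmult_closed[OF a(1) iR]] y by blast
qed

lemma twin_zero_square_subset:
  assumes a: "a \<in> R" "a \<notin> T" and b: "b \<in> R" "b \<notin> T" and ab: "mult a b \<in> \<phi> T"
    and i: "i \<in> T" and j: "j \<in> T"
  shows "mult i j \<in> \<phi> T"
proof (rule ccontr)
  assume ij: "mult i j \<notin> \<phi> T"
  have iR: "i \<in> R" and jR: "j \<in> R" using T_subset i j by blast+
  have "mult b a \<in> \<phi> T" using ab unfolding hmult_commute[OF a(1) b(1)] .
  then have bT: "mult b ` T \<subseteq> \<phi> T" by (rule twin_zero_mult_subset[OF b a])
  have aT: "mult a ` T \<subseteq> \<phi> T" by (rule twin_zero_mult_subset[OF a b ab])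
  obtain x where x: "x \<in> add a i" using hadd_nonempty[OF a(1) iR] by blast
  obtain y where y: "y \<in> add b j" using hadd_nonempty[OF b(1) jR] by blast
  have xR: "x \<in> R" and yR: "y \<in> R" using hadd_closed[OF a(1) iR] hadd_closed[OF b(1) jR] x y
    by blast+
  have "x \<notin> T" using hadd_mem_hyperideal_iff'[OF T_hyperideal x i a(1)] a(2) by blast
  have "y \<notin> T" using hadd_mem_hyperideal_iff'[OF T_hyperideal y j b(1)] b(2) by blast
  have "mult a j \<in> \<phi> T" using aT j by blast
  with ab have "add (mult a b) (mult a j) \<subseteq> \<phi> T"
    by (rule hyperideal_hadd_closed[OF phi_hyperideal])
  then have ay: "mult a y \<in> \<phi> T" using hmult_mem_hadd_left[OF a(1) b(1) jR y] by blast
  have iy: "mult i y \<in> add (mult i b) (mult i j)" by (rule hmult_mem_hadd_left[OF iR b(1) jR y])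
  have "mult b i \<in> \<phi> T" using bT i by blast
  then have "mult i b \<in> \<phi> T" unfolding hmult_commute[OF b(1) iR] .
  then have "mult i y \<notin> \<phi> T"
    using hadd_mem_hyperideal_iff[OF phi_hyperideal iy _ hmult_closed[OF iR jR]] ij by blast
  moreover have xy: "mult x y \<in> add (mult a y) (mult i y)"
    by (rule hmult_mem_hadd_right[OF yR a(1) iR x])
  ultimately have "mult x y \<notin> \<phi> T"
    using hadd_mem_hyperideal_iff[OF phi_hyperideal xy ay hmult_closed[OF iR yR]] by blast
  moreover have "mult x y \<in> T"
  proof -
    have "mult a y \<in> T" using ay phi_subset by blast
    then have "add (mult a y) (mult i y) \<subseteq> T"
      by (rule hyperideal_hadd_closed[OF T_hyperideal _ hyperideal_mult_closed[OF T_hyperideal yR i,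
            unfolded hmult_commute[OF yR iR]]])
    with xy show ?thesis by blast
  qed
  ultimately show False using phi_primeD[OF xR yR] \<open>x \<notin> T\<close> \<open>y \<notin> T\<close> by blast
qed

lemma hpow_mem_mult_subset:
  assumes r: "r \<in> R" "r \<notin> T" and "T \<noteq> R" and rn: "hpow mult one r n \<in> T"
  shows "mult r ` T \<subseteq> \<phi> T"
proof -
  have "one \<notin> T" using hyperideal_one_mem_eq[OF T_hyperideal] \<open>T \<noteq> R\<close> by blast
  then obtain k where k: "hpow mult one r k \<notin> T" "mult r (hpow mult one r k) \<in> T"
    using exists_hpow_not_mem_mult_mem[OF _ rn] by blast
  have kR: "hpow mult one r k \<in> R" by (rule hpow_closed[OF r(1)])
  have "mult r (hpow mult one r k) \<in> \<phi> T" by (rule phi_primeD[OF r(1) kR k(2) r(2) k(1)])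
  then show ?thesis by (rule twin_zero_mult_subset[OF r kR k(1)])
qed

end

theorem mainTheorem8:
  fixes R :: "'a set" and add :: "'a \<Rightarrow> 'a \<Rightarrow> 'a set" and mult :: "'a \<Rightarrow> 'a \<Rightarrow> 'a"
    and z one :: 'a and \<phi> :: "'a set \<Rightarrow> 'a set" and T :: "'a set"
  assumes "krasner_hyperring R add mult z one"
    and "\<forall>I\<in>hyperideals R add mult z. \<phi> I \<in> hyperideals R add mult z \<or> \<phi> I = {}"
    and "hyperideal R add mult z T" and "T \<noteq> R"
    and "\<phi> T \<subseteq> T"
    and "phi_prime R mult \<phi> T" and "\<not> hprime R mult T"
  shows "\<forall>t\<in>T. \<forall>a\<in>hradical R mult one (\<phi> T). mult t a \<in> \<phi> T"
proof (intro ballI)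
  fix t r assume t: "t \<in> T" and r: "r \<in> hradical R mult one (\<phi> T)"
  obtain a b where a: "a \<in> R" "a \<notin> T" and b: "b \<in> R" "b \<notin> T" and "mult a b \<in> T"
    using assms(7) unfolding hprime_def by blast
  with assms(6) have ab: "mult a b \<in> \<phi> T" unfolding phi_prime_def by blast
  have "T \<in> hyperideals R add mult z" using assms(3) unfolding hyperideals_def by simp
  with assms(2) ab have "hyperideal R add mult z (\<phi> T)" unfolding hyperideals_def by auto
  then interpret phi_prime_hyperideal R add mult z one \<phi> T
    by (intro phi_prime_hyperideal.intro hyperring.intro phi_prime_hyperideal_axioms.intro assms(1,3,5,6))
  obtain n where rR: "r \<in> R" and rn: "hpow mult one r n \<in> T"
    using r phi_subset unfolding hradical_def by blast
  show "mult t r \<in> \<phi> T"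
  proof (cases "r \<in> T")
    case True
    with t show ?thesis by (rule twin_zero_square_subset[OF a b ab])
  next
    case False
    with rR t have rt: "mult r t \<in> \<phi> T" using hpow_mem_mult_subset[OF _ _ assms(4) rn] by blast
    have "t \<in> R" using T_subset t by blast
    show ?thesis using rt unfolding hmult_commute[OF \<open>t \<in> R\<close> rR] .
  qed
qed

end
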